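(* There is an absolute constant $C$ such that the following holds. Let $M$ be a deterministic complex $2n\times 2n$ matrix, let $P_n$ be the permutation matrix of a uniformly random permutation of $[n]$, and let $\mathsf P=\begin{pmatrix}0&P_n-\mathbb EP_n\\(P_n-\mathbb EP_n)^*&0\end{pmatrix}$. Then for every $i\in[n]$, each of the following holds up to an additive error of absolute value at most $C\|M\|^2/\sqrt n$: (i) $\mathbb E[(\mathsf PM\mathsf PM)_{i,i}]=M_{i,i}\cdot\frac1n\sum_{j=1}^nM_{n+j,n+j}$; (ii) $\mathbb E[(\mathsf PM\mathsf PM)_{n+i,n+i}]=M_{n+i,n+i}\cdot\frac1n\sum_{j=1}^nM_{j,j}$; (iii) $\mathbb E[(\mathsf PM\mathsf PM)_{n+i,i}]=M_{n+i,i}\cdot\frac1n\sum_{j=1}^nM_{j,j}$; (iv) $\mathbb E[(\mathsf PM\mathsf PM)_{i,n+i}]=M_{i,n+i}\cdot\frac1n\sum_{j=1}^nM_{n+j,n+j}$.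
   Context: $\|M\|$ is the operator norm; $\mathbb EP_n=\frac1n\mathbf 1\mathbf 1^{\mathsf T}$. *)

theory Defs
  imports Complex_Main "HOL-Combinatorics.Permutations"
begin

text \<open>Matrices of size m x m are functions nat => nat => complex, with indices
  0..m-1 (entries outside the range are irrelevant).\<close>

definition mmul :: "nat \<Rightarrow> (nat \<Rightarrow> nat \<Rightarrow> complex) \<Rightarrow> (nat \<Rightarrow> nat \<Rightarrow> complex) \<Rightarrow> nat \<Rightarrow> nat \<Rightarrow> complex" where
  "mmul m A B a b = (\<Sum>k<m. A a k * B k b)"

definition vnorm :: "nat \<Rightarrow> (nat \<Rightarrow> complex) \<Rightarrow> real" where
  "vnorm m v = sqrt (\<Sum>i<m. (cmod (v i))\<^sup>2)"

definition opnorm :: "nat \<Rightarrow> (nat \<Rightarrow> nat \<Rightarrow> complex) \<Rightarrow> real" where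
  "opnorm m M = Sup {vnorm m (\<lambda>a. \<Sum>b<m. M a b * v b) | v. vnorm m v \<le> 1}"

definition permmat :: "(nat \<Rightarrow> nat) \<Rightarrow> nat \<Rightarrow> nat \<Rightarrow> complex" where
  "permmat \<sigma> a b = (if \<sigma> a = b then 1 else 0)"

text \<open>Centered permutation matrix P_n - E P_n = P_n - (1/n) 1 1^T.\<close>
definition cpermmat :: "nat \<Rightarrow> (nat \<Rightarrow> nat) \<Rightarrow> nat \<Rightarrow> nat \<Rightarrow> complex" where
  "cpermmat n \<sigma> a b = permmat \<sigma> a b - 1 / of_nat n"

definition blockP :: "nat \<Rightarrow> (nat \<Rightarrow> nat) \<Rightarrow> nat \<Rightarrow> nat \<Rightarrow> complex" where
  "blockP n \<sigma> a b =
     (if a < n \<and> n \<le> b then cpermmat n \<sigma> a (b - n)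
      else if n \<le> a \<and> b < n then cnj (cpermmat n \<sigma> b (a - n))
      else 0)"

definition Eperm :: "nat \<Rightarrow> ((nat \<Rightarrow> nat) \<Rightarrow> complex) \<Rightarrow> complex" where
  "Eperm n f = (\<Sum>\<sigma>\<in>{\<sigma>. \<sigma> permutes {..<n}}. f \<sigma>) / of_nat (fact n)"

definition PMPM :: "nat \<Rightarrow> (nat \<Rightarrow> nat \<Rightarrow> complex) \<Rightarrow> (nat \<Rightarrow> nat) \<Rightarrow> nat \<Rightarrow> nat \<Rightarrow> complex" where
  "PMPM n M \<sigma> = mmul (2*n) (mmul (2*n) (mmul (2*n) (blockP n \<sigma>) M) (blockP n \<sigma>)) M"

end

theory Submission
  imports Defs "HOL-Analysis.Analysis"
begin

text \<open>Write \<open>Q = P\<^sub>n - J/n\<close>. For \<open>i < n\<close> the entry \<open>(i, s)\<close> of \<open>PMPM\<close> is a sum over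
  \<open>k, w, y\<close> of \<open>Q\<^sub>i\<^sub>y Q\<^sub>k\<^sub>w\<close> times a product of two entries of \<open>M\<close>, and the second moments of
  \<open>Q\<close> are explicit: \<open>E[Q\<^sub>x\<^sub>y Q\<^sub>z\<^sub>w] = \<alpha>[x = z \<and> y = w] - \<beta>[x = z] - \<beta>[y = w] + \<gamma>\<close>
  with \<open>\<alpha> = 1/(n-1)\<close>, \<open>\<beta> = 1/(n(n-1))\<close>, \<open>\<gamma> = 1/(n\<^sup>2(n-1))\<close>. Since \<open>\<alpha> - 1/n = \<beta>\<close>,
  the \<open>\<alpha>\<close>-part of the terms \<open>M\<^sub>n\<^sub>+\<^sub>y\<^sub>,\<^sub>n\<^sub>+\<^sub>w M\<^sub>k\<^sub>,\<^sub>s\<close> is the main term up to a small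
  coefficient. Every other term is a coefficient \<open>O(n\<^sup>-\<^sup>2)\<close> times a product of partial row,
  column or block sums of \<open>M\<close>; Cauchy-Schwarz on a compression of \<open>M\<close> bounds such a sum by
  \<open>\<parallel>M\<parallel>\<close> times the square root of the number of summands, so each product is
  \<open>O(n\<^sup>3\<^sup>/\<^sup>2 \<parallel>M\<parallel>\<^sup>2)\<close>. The only other \<open>\<alpha>\<close>-term is an inner product of two columns of \<open>M\<close>,
  at most \<open>\<parallel>M\<parallel>\<^sup>2\<close>. The rows \<open>n + i\<close> reduce to the rows \<open>i\<close>: conjugating by the swap of
  the two blocks and replacing \<open>\<sigma>\<close> by \<open>\<sigma>\<inverse>\<close> leaves the block matrix of \<open>Q\<close> unchanged,
  preserves \<open>\<parallel>M\<parallel>\<close> and exchanges the diagonal blocks of \<open>M\<close>.\<close>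

section \<open>Counting permutations\<close>

lemma permutes_fix_iff:
  assumes "x \<in> S"
  shows "p permutes S \<and> p x = x \<longleftrightarrow> p permutes (S - {x})"
  using assms permutes_subset[of p "S - {x}" S] unfolding permutes_def by blast

lemma card_permutes_maps_to:
  assumes "finite S" "x \<in> S" "y \<in> S"
  shows "card {p. p permutes S \<and> p x = y} = fact (card S - 1)"
proof -
  let ?t = "Transposition.transpose x y"
  have "bij_betw (\<lambda>p. ?t \<circ> p) {p. p permutes S \<and> p x = x} {p. p permutes S \<and> p x = y}"
    by (rule bij_betwI[where g="\<lambda>p. ?t \<circ> p"])
       (use assms in \<open>auto simp: fun_eq_iff permutes_compose permutes_swap_id\<close>)
  hence "card {p. p permutes S \<and> p x = y} = card {p. p permutes (S - {x})}"
    using permutes_fix_iff[OF assms(2)] by (simp add: bij_betw_same_card)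
  also have "\<dots> = fact (card S - 1)"
    using card_permutations[of "S - {x}" "card S - 1"] assms by auto
  finally show ?thesis .
qed

lemma card_permutes_maps_to2:
  assumes "finite S" "x \<in> S" "y \<in> S" "z \<in> S" "w \<in> S" "x \<noteq> z" "y \<noteq> w"
  shows "card {p. p permutes S \<and> p x = y \<and> p z = w} = fact (card S - 2)"
proof -
  let ?t = "Transposition.transpose x y"
  have "bij_betw (\<lambda>p. ?t \<circ> p) {p. (p permutes S \<and> p x = x) \<and> p z = ?t w}
          {p. p permutes S \<and> p x = y \<and> p z = w}"
    by (rule bij_betwI[where g="\<lambda>p. ?t \<circ> p"])
       (use assms in \<open>auto simp: fun_eq_iff permutes_compose permutes_swap_id\<close>)
  hence "card {p. p permutes S \<and> p x = y \<and> p z = w} = card {p. p permutes (S - {x}) \<and> p z = ?t w}"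
    using permutes_fix_iff[OF assms(2)] by (simp add: bij_betw_same_card)
  also have "\<dots> = fact (card (S - {x}) - 1)"
    using assms by (intro card_permutes_maps_to) (auto simp: Transposition.transpose_def)
  also have "card (S - {x}) - 1 = card S - 2" using assms by auto
  finally show ?thesis .
qed

section \<open>Expectation over a uniform random permutation\<close>

lemma Eperm_cong:
  assumes "\<And>\<sigma>. \<sigma> permutes {..<n} \<Longrightarrow> f \<sigma> = g \<sigma>"
  shows "Eperm n f = Eperm n g"
  unfolding Eperm_def using assms by (intro arg_cong[where f="\<lambda>s. s / _"] sum.cong) auto

lemma Eperm_add: "Eperm n (\<lambda>\<sigma>. f \<sigma> + g \<sigma>) = Eperm n f + Eperm n g"
  by (simp add: Eperm_def sum.distrib add_divide_distrib)

lemma Eperm_diff: "Eperm n (\<lambda>\<sigma>. f \<sigma> - g \<sigma>) = Eperm n f - Eperm n g"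
  by (simp add: Eperm_def sum_subtractf diff_divide_distrib)

lemma Eperm_mult_right: "Eperm n (\<lambda>\<sigma>. f \<sigma> * c) = Eperm n f * c"
  by (simp add: Eperm_def sum_distrib_right)

lemma Eperm_const: "Eperm n (\<lambda>\<sigma>. c) = c"
  using card_permutations[of "{..<n}" n] by (simp add: Eperm_def)

lemma Eperm_sum: "Eperm n (\<lambda>\<sigma>. \<Sum>k\<in>A. f k \<sigma>) = (\<Sum>k\<in>A. Eperm n (f k))"
  unfolding Eperm_def by (subst sum.swap) (simp add: sum_divide_distrib)

lemma Eperm_indicator:
  "Eperm n (\<lambda>\<sigma>. if P \<sigma> then 1 else 0) = of_nat (card {\<sigma>. \<sigma> permutes {..<n} \<and> P \<sigma>}) / fact n"
proof -
  have "finite {\<sigma>. \<sigma> permutes {..<n::nat}}" by (simp add: finite_permutations)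
  then show ?thesis
    unfolding Eperm_def by (simp add: sum.If_cases Int_def conj_commute)
qed

lemma Eperm_inv: "Eperm n (\<lambda>\<sigma>. f (inv \<sigma>)) = Eperm n f"
  unfolding Eperm_def
  by (rule arg_cong[where f="\<lambda>s. s / _"], rule sum.reindex_bij_witness[where i=inv and j=inv])
     (auto simp: permutes_inv permutes_inv_inv)

lemma Eperm_permmat:
  assumes "x < n" "y < n"
  shows "Eperm n (\<lambda>\<sigma>. permmat \<sigma> x y) = 1 / of_nat n"
proof -
  have "Eperm n (\<lambda>\<sigma>. permmat \<sigma> x y) = fact (n - 1) / fact n"
    unfolding permmat_def Eperm_indicator using card_permutes_maps_to[of "{..<n}" x y] assms by simp
  also have "(fact n :: complex) = of_nat n * fact (n - 1)"
    using assms by (simp add: fact_reduce)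
  finally show ?thesis using assms by simp
qed

lemma Eperm_permmat_mult:
  assumes "x < n" "y < n" "z < n" "w < n"
  shows "Eperm n (\<lambda>\<sigma>. permmat \<sigma> x y * permmat \<sigma> z w) =
    (if x = z then (if y = w then 1 / of_nat n else 0)
     else if y = w then 0 else 1 / (of_nat n * (of_nat n - 1)))"
proof (cases "x = z")
  case True
  then have "(\<lambda>\<sigma>. permmat \<sigma> x y * permmat \<sigma> z w) = (\<lambda>\<sigma>. if y = w then permmat \<sigma> x y else 0)"
    by (auto simp: permmat_def fun_eq_iff)
  with True show ?thesis
    using Eperm_permmat[OF assms(1,2)] by (cases "y = w") (simp_all add: Eperm_const)
next
  case xz: False
  show ?thesis
  proof (cases "y = w")
    case True
    have "permmat \<sigma> x y * permmat \<sigma> z w = 0" if "\<sigma> permutes {..<n}" for \<sigma>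
      using permutes_inj[OF that] xz True unfolding permmat_def inj_def by auto
    then show ?thesis
      using xz True Eperm_cong[of n _ "\<lambda>_. 0"] by (simp add: Eperm_const)
  next
    case yw: False
    have n2: "n \<ge> 2" using assms xz by linarith
    have "(fact n :: complex) = of_nat n * (of_nat (n - 1) * fact (n - 2))"
      using n2 fact_reduce[of n, where 'a=complex] fact_reduce[of "n - 1", where 'a=complex]
      by (simp add: numeral_2_eq_2)
    moreover have "(\<lambda>\<sigma>. permmat \<sigma> x y * permmat \<sigma> z w) = (\<lambda>\<sigma>. if \<sigma> x = y \<and> \<sigma> z = w then 1 else 0)"
      by (auto simp: permmat_def fun_eq_iff)
    then have "Eperm n (\<lambda>\<sigma>. permmat \<sigma> x y * permmat \<sigma> z w) = fact (n - 2) / fact n"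
      using card_permutes_maps_to2[of "{..<n}" x y z w] assms xz yw by (simp add: Eperm_indicator)
    ultimately show ?thesis using xz yw n2 by (simp add: of_nat_diff)
  qed
qed

text \<open>All three vanish for \<open>n = 1\<close> (division by zero), consistently with \<open>Q = 0\<close> there.\<close>

definition cov\<alpha> :: "nat \<Rightarrow> complex" where "cov\<alpha> n = 1 / (of_nat n - 1)"
definition cov\<beta> :: "nat \<Rightarrow> complex" where "cov\<beta> n = 1 / (of_nat n * (of_nat n - 1))"
definition cov\<gamma> :: "nat \<Rightarrow> complex" where "cov\<gamma> n = 1 / (of_nat n ^ 2 * (of_nat n - 1))"

lemma cov_differences:
  assumes "n \<ge> 2"
  shows "cov\<alpha> n - cov\<beta> n = 1 / of_nat n" "cov\<beta> n - cov\<gamma> n = 1 / of_nat n ^ 2"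
proof -
  from assms have "(of_nat n :: complex) \<noteq> 0" "(of_nat n - 1 :: complex) \<noteq> 0" by auto
  then show "cov\<alpha> n - cov\<beta> n = 1 / of_nat n" "cov\<beta> n - cov\<gamma> n = 1 / of_nat n ^ 2"
    unfolding cov\<alpha>_def cov\<beta>_def cov\<gamma>_def by (simp_all add: divide_simps power2_eq_square)
qed

lemma Eperm_cpermmat_mult:
  assumes "x < n" "y < n" "z < n" "w < n"
  shows "Eperm n (\<lambda>\<sigma>. cpermmat n \<sigma> x y * cpermmat n \<sigma> z w) =
    (if x = z \<and> y = w then cov\<alpha> n else 0) - (if x = z then cov\<beta> n else 0)
      - (if y = w then cov\<beta> n else 0) + cov\<gamma> n"
proof -
  have "Eperm n (\<lambda>\<sigma>. cpermmat n \<sigma> x y * cpermmat n \<sigma> z w) =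
     Eperm n (\<lambda>\<sigma>. permmat \<sigma> x y * permmat \<sigma> z w
       - (permmat \<sigma> x y / of_nat n + permmat \<sigma> z w / of_nat n) + 1 / of_nat n ^ 2)"
    unfolding cpermmat_def by (simp add: algebra_simps power2_eq_square)
  also have "\<dots> = Eperm n (\<lambda>\<sigma>. permmat \<sigma> x y * permmat \<sigma> z w) - 1 / of_nat n ^ 2"
    using assms by (simp add: Eperm_add Eperm_diff Eperm_const Eperm_permmat
      divide_inverse Eperm_mult_right power2_eq_square)
  finally have reduce: "Eperm n (\<lambda>\<sigma>. cpermmat n \<sigma> x y * cpermmat n \<sigma> z w) =
      Eperm n (\<lambda>\<sigma>. permmat \<sigma> x y * permmat \<sigma> z w) - 1 / of_nat n ^ 2" .
  show ?thesis
  proof (cases "n = 1")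
    case True
    then show ?thesis
      unfolding reduce Eperm_permmat_mult[OF assms] cov\<alpha>_def cov\<beta>_def cov\<gamma>_def
      using assms by simp
  next
    case False
    with assms have "n \<ge> 2" by linarith
    from cov_differences[OF this] show ?thesis
      unfolding reduce Eperm_permmat_mult[OF assms] cov\<beta>_def[symmetric]
      by (simp add: algebra_simps)
  qed
qed

section \<open>Expansion of the upper rows\<close>

lemma sum_lessThan_double:
  fixes f :: "nat \<Rightarrow> 'a::comm_monoid_add"
  shows "(\<Sum>k<2*n. f k) = (\<Sum>k<n. f k) + (\<Sum>k<n. f (n + k))"
proof -
  have "(\<Sum>k<2*n. f k) = sum f {0..<n} + sum f {n..<n+n}"
    using sum.atLeastLessThan_concat[of 0 n "n+n" f] by (simp add: atLeast0LessThan mult_2)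
  also have "sum f {n..<n+n} = (\<Sum>k<n. f (n + k))"
    using sum.shift_bounds_nat_ivl[of f 0 n n] by (simp add: atLeast0LessThan add.commute)
  finally show ?thesis by (simp add: atLeast0LessThan)
qed

lemma cnj_cpermmat [simp]: "cnj (cpermmat n \<sigma> a b) = cpermmat n \<sigma> a b"
  by (simp add: cpermmat_def permmat_def)

lemma blockP_row_upper:
  "i < n \<Longrightarrow> (\<Sum>m<2*n. blockP n \<sigma> i m * f m) = (\<Sum>y<n. cpermmat n \<sigma> i y * f (n + y))"
  by (simp add: sum_lessThan_double blockP_def)

lemma blockP_col_lower:
  "k < n \<Longrightarrow> (\<Sum>l<2*n. g l * blockP n \<sigma> l k) = (\<Sum>y<n. g (n + y) * cpermmat n \<sigma> k y)"
  by (simp add: sum_lessThan_double blockP_def)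

lemma blockP_col_upper:
  "k < n \<Longrightarrow> (\<Sum>l<2*n. g l * blockP n \<sigma> l (n + k)) = (\<Sum>x<n. g x * cpermmat n \<sigma> x k)"
  by (simp add: sum_lessThan_double blockP_def)

lemma PMPM_upper_row:
  fixes M :: "nat \<Rightarrow> nat \<Rightarrow> complex" and \<sigma> :: "nat \<Rightarrow> nat"
  assumes "i < n"
  defines "Q \<equiv> cpermmat n \<sigma>"
  shows "PMPM n M \<sigma> i s =
    (\<Sum>k<n. \<Sum>w<n. \<Sum>y<n. (Q i y * Q k w) * (M (n+y) (n+w) * M k s)) +
    (\<Sum>k<n. \<Sum>w<n. \<Sum>y<n. (Q i y * Q k w) * (M (n+y) k * M (n+w) s))"
proof -
  let ?PMP = "mmul (2*n) (mmul (2*n) (blockP n \<sigma>) M) (blockP n \<sigma>)"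
  have PM: "mmul (2*n) (blockP n \<sigma>) M i l = (\<Sum>y<n. Q i y * M (n+y) l)" for l
    unfolding mmul_def Q_def using blockP_row_upper[OF assms(1)] .
  have PMP_lower: "?PMP i k = (\<Sum>w<n. (\<Sum>y<n. Q i y * M (n+y) (n+w)) * Q k w)" if "k < n" for k
    unfolding mmul_def[of "2*n" "mmul (2*n) (blockP n \<sigma>) M"] blockP_col_lower[OF that]
    using PM unfolding mmul_def Q_def by simp
  have PMP_upper: "?PMP i (n+w) = (\<Sum>k<n. (\<Sum>y<n. Q i y * M (n+y) k) * Q k w)" if "w < n" for w
    unfolding mmul_def[of "2*n" "mmul (2*n) (blockP n \<sigma>) M"] blockP_col_upper[OF that]
    using PM unfolding mmul_def Q_def by simp
  have "PMPM n M \<sigma> i s = (\<Sum>k<n. (\<Sum>w<n. (\<Sum>y<n. Q i y * M (n+y) (n+w)) * Q k w) * M k s)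
      + (\<Sum>w<n. (\<Sum>k<n. (\<Sum>y<n. Q i y * M (n+y) k) * Q k w) * M (n+w) s)"
    unfolding PMPM_def mmul_def[where A="?PMP"] sum_lessThan_double
    by (intro arg_cong2[where f="(+)"] sum.cong refl) (simp_all add: PMP_lower PMP_upper)
  also have "\<dots> = (\<Sum>k<n. \<Sum>w<n. \<Sum>y<n. (Q i y * Q k w) * (M (n+y) (n+w) * M k s)) +
    (\<Sum>w<n. \<Sum>k<n. \<Sum>y<n. (Q i y * Q k w) * (M (n+y) k * M (n+w) s))"
    by (simp only: sum_distrib_left sum_distrib_right) (simp add: mult_ac)
  also have "(\<Sum>w<n. \<Sum>k<n. \<Sum>y<n. (Q i y * Q k w) * (M (n+y) k * M (n+w) s)) =
     (\<Sum>k<n. \<Sum>w<n. \<Sum>y<n. (Q i y * Q k w) * (M (n+y) k * M (n+w) s))"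
    by (rule sum.swap)
  finally show ?thesis .
qed

lemma sum_cov_weighted:
  fixes F :: "nat \<Rightarrow> nat \<Rightarrow> nat \<Rightarrow> complex"
  assumes "i < n"
  shows "(\<Sum>k<n. \<Sum>w<n. \<Sum>y<n. ((if i = k \<and> y = w then A else 0) - (if i = k then B else 0)
            - (if y = w then B else 0) + G) * F k w y)
   = A * (\<Sum>y<n. F i y y) - B * (\<Sum>w<n. \<Sum>y<n. F i w y) - B * (\<Sum>k<n. \<Sum>w<n. F k w w)
     + G * (\<Sum>k<n. \<Sum>w<n. \<Sum>y<n. F k w y)"
proof -
  have pull: "(\<Sum>k<n. \<Sum>w<n. \<Sum>y<n. if i = k then f k w y else 0) = (\<Sum>w<n. \<Sum>y<n. f i w y)"
    for f :: "nat \<Rightarrow> nat \<Rightarrow> nat \<Rightarrow> complex"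
  proof -
    have "(\<Sum>w<n. \<Sum>y<n. if i = k then f k w y else 0) = (if i = k then \<Sum>w<n. \<Sum>y<n. f k w y else 0)"
      for k by (cases "i = k") simp_all
    then show ?thesis using assms by (simp add: sum.delta)
  qed
  have split: "((if i = k \<and> y = w then A else 0) - (if i = k then B else 0) - (if y = w then B else 0) + G) * F k w y
     = (if i = k then (if y = w then A * F k w y else 0) else 0) - (if i = k then B * F k w y else 0)
       - (if y = w then B * F k w y else 0) + G * F k w y" for k w y
    by (simp add: algebra_simps)
  show ?thesis
    unfolding split sum.distrib sum_subtractf pull
    by (simp add: sum_distrib_left sum.delta')
qed

lemma Eperm_PMPM_upper_row:
  assumes "i < n"
  shows "Eperm n (\<lambda>\<sigma>. PMPM n M \<sigma> i s) =
   (cov\<alpha> n * ((\<Sum>y<n. M (n+y) (n+y)) * M i s) - cov\<beta> n * (\<Sum>w<n. \<Sum>y<n. M (n+y) (n+w) * M i s)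
     - cov\<beta> n * (\<Sum>k<n. \<Sum>w<n. M (n+w) (n+w) * M k s)
     + cov\<gamma> n * (\<Sum>k<n. \<Sum>w<n. \<Sum>y<n. M (n+y) (n+w) * M k s))
   + (cov\<alpha> n * (\<Sum>y<n. M (n+y) i * M (n+y) s) - cov\<beta> n * (\<Sum>w<n. \<Sum>y<n. M (n+y) i * M (n+w) s)
     - cov\<beta> n * (\<Sum>k<n. \<Sum>w<n. M (n+w) k * M (n+w) s)
     + cov\<gamma> n * (\<Sum>k<n. \<Sum>w<n. \<Sum>y<n. M (n+y) k * M (n+w) s))"
proof -
  let ?cov = "\<lambda>k w y. (if i = k \<and> y = w then cov\<alpha> n else 0) - (if i = k then cov\<beta> n else 0)
                 - (if y = w then cov\<beta> n else 0) + cov\<gamma> n"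
  have "Eperm n (\<lambda>\<sigma>. PMPM n M \<sigma> i s) =
    (\<Sum>k<n. \<Sum>w<n. \<Sum>y<n. Eperm n (\<lambda>\<sigma>. cpermmat n \<sigma> i y * cpermmat n \<sigma> k w) * (M (n+y) (n+w) * M k s)) +
    (\<Sum>k<n. \<Sum>w<n. \<Sum>y<n. Eperm n (\<lambda>\<sigma>. cpermmat n \<sigma> i y * cpermmat n \<sigma> k w) * (M (n+y) k * M (n+w) s))"
    by (simp only: PMPM_upper_row[OF assms] Eperm_add Eperm_sum Eperm_mult_right)
  also have "\<dots> = (\<Sum>k<n. \<Sum>w<n. \<Sum>y<n. ?cov k w y * (M (n+y) (n+w) * M k s)) +
      (\<Sum>k<n. \<Sum>w<n. \<Sum>y<n. ?cov k w y * (M (n+y) k * M (n+w) s))"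
    using assms by (intro arg_cong2[where f="(+)"] sum.cong refl) (simp_all add: Eperm_cpermmat_mult)
  finally show ?thesis
    unfolding sum_cov_weighted[OF assms] by (simp add: sum_distrib_right)
qed

section \<open>Operator norm bounds\<close>

lemma cmod_sum_mult_le:
  "cmod (\<Sum>c\<in>C. U c * W c) \<le> sqrt (\<Sum>c\<in>C. (cmod (U c))\<^sup>2) * sqrt (\<Sum>c\<in>C. (cmod (W c))\<^sup>2)"
proof -
  have "cmod (\<Sum>c\<in>C. U c * W c) \<le> (\<Sum>c\<in>C. cmod (U c) * cmod (W c))"
    by (rule order_trans[OF norm_sum]) (simp add: norm_mult)
  also have "\<dots> \<le> sqrt ((\<Sum>c\<in>C. (cmod (U c))\<^sup>2) * (\<Sum>c\<in>C. (cmod (W c))\<^sup>2))"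
    by (rule real_le_rsqrt) (rule Cauchy_Schwarz_ineq_sum)
  also have "\<dots> = sqrt (\<Sum>c\<in>C. (cmod (U c))\<^sup>2) * sqrt (\<Sum>c\<in>C. (cmod (W c))\<^sup>2)"
    by (simp add: real_sqrt_mult)
  finally show ?thesis .
qed

lemma vnorm_nonneg: "0 \<le> vnorm m v"
  unfolding vnorm_def by (simp add: sum_nonneg)

lemma vnorm_scale: "vnorm m (\<lambda>a. x * v a) = cmod x * vnorm m v"
proof -
  have "(\<Sum>i<m. (cmod (x * v i))\<^sup>2) = (cmod x)\<^sup>2 * (\<Sum>i<m. (cmod (v i))\<^sup>2)"
    by (simp add: norm_mult power_mult_distrib sum_distrib_left)
  then show ?thesis unfolding vnorm_def by (simp add: real_sqrt_mult)
qed

lemma vnorm_eq_0D: "vnorm m v = 0 \<Longrightarrow> b < m \<Longrightarrow> v b = 0"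
  unfolding vnorm_def by (simp add: sum_nonneg_eq_0_iff)

lemma cmod_le_vnorm: "b < m \<Longrightarrow> cmod (v b) \<le> vnorm m v"
  unfolding vnorm_def by (rule real_le_rsqrt) (intro member_le_sum, auto)

lemma vnorm_permute: "\<pi> permutes {..<m} \<Longrightarrow> vnorm m (v \<circ> \<pi>) = vnorm m v"
  unfolding vnorm_def using sum.permute[of \<pi> "{..<m}" "\<lambda>i. (cmod (v i))\<^sup>2"]
  by (simp add: comp_def)

lemma bdd_above_opnorm_set: "bdd_above {vnorm m (\<lambda>a. \<Sum>b<m. M a b * v b) | v. vnorm m v \<le> 1}"
proof (rule bdd_aboveI)
  fix x assume "x \<in> {vnorm m (\<lambda>a. \<Sum>b<m. M a b * v b) | v. vnorm m v \<le> 1}"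
  then obtain v where v: "vnorm m v \<le> 1" and x: "x = vnorm m (\<lambda>a. \<Sum>b<m. M a b * v b)"
    by auto
  have "cmod (\<Sum>b<m. M a b * v b) \<le> (\<Sum>b<m. cmod (M a b))" for a
  proof -
    have "cmod (\<Sum>b<m. M a b * v b) \<le> (\<Sum>b<m. cmod (M a b) * cmod (v b))"
      by (rule order_trans[OF norm_sum]) (simp add: norm_mult)
    also have "\<dots> \<le> (\<Sum>b<m. cmod (M a b))"
      by (intro sum_mono mult_left_le order_trans[OF cmod_le_vnorm v]) auto
    finally show ?thesis .
  qed
  then have "(\<Sum>a<m. (cmod (\<Sum>b<m. M a b * v b))\<^sup>2) \<le> (\<Sum>a<m. (\<Sum>b<m. cmod (M a b))\<^sup>2)"
    by (intro sum_mono power_mono) auto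
  then show "x \<le> sqrt (\<Sum>a<m. (\<Sum>b<m. cmod (M a b))\<^sup>2)"
    unfolding x vnorm_def by simp
qed

lemma opnorm_upper: "vnorm m v \<le> 1 \<Longrightarrow> vnorm m (\<lambda>a. \<Sum>b<m. M a b * v b) \<le> opnorm m M"
  unfolding opnorm_def by (rule cSup_upper[OF _ bdd_above_opnorm_set]) auto

lemma opnorm_nonneg: "0 \<le> opnorm m M"
  using opnorm_upper[of m "\<lambda>_. 0" M] by (simp add: vnorm_def)

lemma opnorm_bound: "vnorm m (\<lambda>a. \<Sum>b<m. M a b * v b) \<le> opnorm m M * vnorm m v"
proof (cases "vnorm m v = 0")
  case True
  then have "(\<lambda>a. \<Sum>b<m. M a b * v b) = (\<lambda>_. 0)"
    using vnorm_eq_0D[OF True] by (auto intro!: sum.neutral)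
  with True show ?thesis by (simp add: vnorm_def)
next
  case False
  define c where "c = vnorm m v"
  have c: "c > 0" using False vnorm_nonneg[of m v] unfolding c_def by linarith
  have "vnorm m (\<lambda>b. of_real (1 / c) * v b) = 1"
    unfolding vnorm_scale using c unfolding c_def by (simp add: norm_divide)
  then have "vnorm m (\<lambda>a. \<Sum>b<m. M a b * (of_real (1 / c) * v b)) \<le> opnorm m M"
    by (intro opnorm_upper) simp
  also have "(\<lambda>a. \<Sum>b<m. M a b * (of_real (1 / c) * v b)) = (\<lambda>a. of_real (1 / c) * (\<Sum>b<m. M a b * v b))"
    by (simp add: sum_distrib_left mult_ac)
  finally have "(1 / c) * vnorm m (\<lambda>a. \<Sum>b<m. M a b * v b) \<le> opnorm m M"
    unfolding vnorm_scale using c by (simp add: norm_divide)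
  with c show ?thesis unfolding c_def by (simp add: field_simps)
qed

lemma opnorm_conj_permutes:
  assumes \<pi>: "\<pi> permutes {..<m}"
  shows "opnorm m (\<lambda>a b. M (\<pi> a) (\<pi> b)) = opnorm m M"
proof -
  have apply_conj: "(\<lambda>a. \<Sum>b<m. M (\<pi> a) (\<pi> b) * v b) = (\<lambda>a. \<Sum>b<m. M a b * (v \<circ> inv \<pi>) b) \<circ> \<pi>" for v
    using sum.permute[OF \<pi>, of "\<lambda>b. M _ b * (v \<circ> inv \<pi>) b"]
    by (simp add: fun_eq_iff comp_def permutes_inverses(2)[OF \<pi>])
  have "{vnorm m (\<lambda>a. \<Sum>b<m. M (\<pi> a) (\<pi> b) * v b) | v. vnorm m v \<le> 1}
      = {vnorm m (\<lambda>a. \<Sum>b<m. M a b * v b) | v. vnorm m v \<le> 1}" (is "?L = ?R")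
  proof
    show "?L \<subseteq> ?R"
    proof
      fix x assume "x \<in> ?L"
      then obtain v where "vnorm m v \<le> 1" "x = vnorm m (\<lambda>a. \<Sum>b<m. M (\<pi> a) (\<pi> b) * v b)"
        by auto
      then show "x \<in> ?R"
        unfolding apply_conj vnorm_permute[OF \<pi>]
        by (auto simp: vnorm_permute[OF permutes_inv[OF \<pi>]] intro!: exI[of _ "v \<circ> inv \<pi>"])
    qed
    show "?R \<subseteq> ?L"
    proof
      fix x assume "x \<in> ?R"
      then obtain v where "vnorm m v \<le> 1" "x = vnorm m (\<lambda>a. \<Sum>b<m. M a b * v b)" by auto
      then show "x \<in> ?L"
        unfolding apply_conj vnorm_permute[OF \<pi>]
        by (auto simp: vnorm_permute[OF \<pi>] permutes_inverses(1)[OF \<pi>] intro!: exI[of _ "v \<circ> \<pi>"])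
    qed
  qed
  then show ?thesis unfolding opnorm_def by simp
qed

lemma cmod_bilinear_le: "cmod (\<Sum>a<m. u a * (\<Sum>b<m. M a b * v b)) \<le> opnorm m M * vnorm m u * vnorm m v"
proof -
  have "cmod (\<Sum>a<m. u a * (\<Sum>b<m. M a b * v b)) \<le> vnorm m u * vnorm m (\<lambda>a. \<Sum>b<m. M a b * v b)"
    unfolding vnorm_def by (rule cmod_sum_mult_le)
  also have "\<dots> \<le> vnorm m u * (opnorm m M * vnorm m v)"
    by (rule mult_left_mono[OF opnorm_bound vnorm_nonneg])
  finally show ?thesis by (simp add: mult_ac)
qed

lemma sum_extend_by_zero:
  fixes \<phi> :: "nat \<Rightarrow> nat \<Rightarrow> 'a::comm_monoid_add"
  assumes "inj_on g B" "g ` B \<subseteq> C" "finite C"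
  shows "(\<Sum>c\<in>C. if c \<in> g ` B then \<phi> c (the_inv_into B g c) else 0) = (\<Sum>b\<in>B. \<phi> (g b) b)"
proof -
  have "(\<Sum>c\<in>C. if c \<in> g ` B then \<phi> c (the_inv_into B g c) else 0) = (\<Sum>c\<in>g ` B. \<phi> c (the_inv_into B g c))"
    using assms by (intro sum.mono_neutral_cong_right) auto
  also have "\<dots> = (\<Sum>b\<in>B. \<phi> (g b) b)"
    using assms(1) by (simp add: sum.reindex the_inv_into_f_f)
  finally show ?thesis .
qed

lemma cmod_compressed_bilinear_le:
  fixes M :: "nat \<Rightarrow> nat \<Rightarrow> complex" and f g :: "nat \<Rightarrow> nat"
  assumes f: "inj_on f {..<p}" "f ` {..<p} \<subseteq> {..<m}"
    and g: "inj_on g {..<q}" "g ` {..<q} \<subseteq> {..<m}"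
  shows "cmod (\<Sum>a<p. \<Sum>b<q. u a * M (f a) (g b) * v b)
     \<le> opnorm m M * sqrt (\<Sum>a<p. (cmod (u a))\<^sup>2) * sqrt (\<Sum>b<q. (cmod (v b))\<^sup>2)"
proof -
  define U where "U c = (if c \<in> f ` {..<p} then u (the_inv_into {..<p} f c) else 0)" for c
  define V where "V c = (if c \<in> g ` {..<q} then v (the_inv_into {..<q} g c) else 0)" for c
  have MV: "(\<Sum>c<m. M r c * V c) = (\<Sum>b<q. M r (g b) * v b)" for r
    unfolding V_def by (rule trans[OF sum.cong[OF refl] sum_extend_by_zero[OF g]]) auto
  have UW: "(\<Sum>c<m. U c * W c) = (\<Sum>a<p. u a * W (f a))" for W :: "nat \<Rightarrow> complex"
    unfolding U_def by (rule trans[OF sum.cong[OF refl] sum_extend_by_zero[OF f]]) auto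
  have "vnorm m U = sqrt (\<Sum>a<p. (cmod (u a))\<^sup>2)"
    unfolding U_def vnorm_def
    by (rule arg_cong[where f=sqrt], rule trans[OF sum.cong[OF refl] sum_extend_by_zero[OF f]]) auto
  moreover have "vnorm m V = sqrt (\<Sum>b<q. (cmod (v b))\<^sup>2)"
    unfolding V_def vnorm_def
    by (rule arg_cong[where f=sqrt], rule trans[OF sum.cong[OF refl] sum_extend_by_zero[OF g]]) auto
  moreover have "(\<Sum>a<p. \<Sum>b<q. u a * M (f a) (g b) * v b) = (\<Sum>c<m. U c * (\<Sum>d<m. M c d * V d))"
    unfolding UW MV by (simp add: sum_distrib_left mult_ac)
  ultimately show ?thesis
    using cmod_bilinear_le[where u=U and v=V and M=M and m=m] by simp
qed

lemma cmod_entry_le_opnorm: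
  assumes "a < m" "b < m"
  shows "cmod (M a b) \<le> opnorm m M"
  using cmod_compressed_bilinear_le[of "\<lambda>_. a" 1 m "\<lambda>_. b" 1 "\<lambda>_. 1" M "\<lambda>_. 1"] assms
  by (force simp: inj_on_def)

lemma cmod_col_sum_le:
  assumes "c + p \<le> m" "s < m"
  shows "cmod (\<Sum>y<p. M (c+y) s) \<le> opnorm m M * sqrt p"
  using cmod_compressed_bilinear_le[of "\<lambda>y. c + y" p m "\<lambda>_. s" 1 "\<lambda>_. 1" M "\<lambda>_. 1"] assms
  by (force simp: inj_on_def)

lemma cmod_block_sum_le:
  assumes "c + p \<le> m" "d + p \<le> m"
  shows "cmod (\<Sum>y<p. \<Sum>w<p. M (c+y) (d+w)) \<le> opnorm m M * p"
  using cmod_compressed_bilinear_le[of "\<lambda>y. c + y" p m "\<lambda>w. d + w" p "\<lambda>_. 1" M "\<lambda>_. 1"] assms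
  by (force simp: inj_on_def mult.assoc)

lemma cmod_diag_sum_le:
  assumes "c + p \<le> m" "d + p \<le> m"
  shows "cmod (\<Sum>y<p. M (c+y) (d+y)) \<le> p * opnorm m M"
proof -
  have "cmod (\<Sum>y<p. M (c+y) (d+y)) \<le> (\<Sum>y<p. cmod (M (c+y) (d+y)))" by (rule norm_sum)
  also have "\<dots> \<le> (\<Sum>y<p. opnorm m M)"
    using assms by (intro sum_mono cmod_entry_le_opnorm) auto
  finally show ?thesis by simp
qed

lemma col_norm_le_opnorm:
  assumes "c + p \<le> m" "s < m"
  shows "sqrt (\<Sum>y<p. (cmod (M (c+y) s))\<^sup>2) \<le> opnorm m M"
proof -
  have "(\<Sum>y<p. (cmod (M (c+y) s))\<^sup>2) = (\<Sum>a\<in>(\<lambda>y. c + y) ` {..<p}. (cmod (M a s))\<^sup>2)"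
    by (simp add: sum.reindex)
  also have "\<dots> \<le> (\<Sum>a<m. (cmod (M a s))\<^sup>2)"
    using assms by (intro sum_mono2) auto
  finally have "sqrt (\<Sum>y<p. (cmod (M (c+y) s))\<^sup>2) \<le> vnorm m (\<lambda>a. M a s)"
    unfolding vnorm_def by simp
  also have "\<dots> \<le> opnorm m M"
  proof -
    define e where "e b = (if b = s then 1 else 0 :: complex)" for b
    have "(\<lambda>a. \<Sum>b<m. M a b * e b) = (\<lambda>a. M a s)" and "vnorm m e = 1"
      using assms
      by (simp_all add: e_def vnorm_def if_distrib[of "\<lambda>x. _ * x"] if_distrib[of "\<lambda>x. (cmod x)\<^sup>2"]
          cong: if_cong)
    then show ?thesis using opnorm_bound[of m M e] by simp
  qed
  finally show ?thesis .
qed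

lemma cmod_col_inner_le:
  assumes "c + p \<le> m" "s < m" "t < m"
  shows "cmod (\<Sum>y<p. M (c+y) s * M (c+y) t) \<le> (opnorm m M)\<^sup>2"
proof -
  have "cmod (\<Sum>y<p. M (c+y) s * M (c+y) t)
      \<le> sqrt (\<Sum>y<p. (cmod (M (c+y) s))\<^sup>2) * sqrt (\<Sum>y<p. (cmod (M (c+y) t))\<^sup>2)"
    by (rule cmod_sum_mult_le)
  also have "\<dots> \<le> opnorm m M * opnorm m M"
    using assms by (intro mult_mono col_norm_le_opnorm opnorm_nonneg) (auto intro: sum_nonneg)
  finally show ?thesis by (simp add: power2_eq_square)
qed

lemma cmod_col_weighted_block_sum_le:
  assumes "c + p \<le> m" "d + p \<le> m" "s < m"
  shows "cmod (\<Sum>y<p. \<Sum>w<p. M (c+y) s * M (c+y) (d+w)) \<le> (opnorm m M)\<^sup>2 * sqrt p"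
proof -
  have "cmod (\<Sum>y<p. \<Sum>w<p. M (c+y) s * M (c+y) (d+w))
      \<le> opnorm m M * sqrt (\<Sum>y<p. (cmod (M (c+y) s))\<^sup>2) * sqrt p"
    using cmod_compressed_bilinear_le[of "\<lambda>y. c + y" p m "\<lambda>w. d + w" p "\<lambda>y. M (c+y) s" M "\<lambda>_. 1"]
      assms by (force simp: inj_on_def)
  also have "\<dots> \<le> opnorm m M * opnorm m M * sqrt p"
    using assms by (intro mult_right_mono mult_left_mono col_norm_le_opnorm opnorm_nonneg) auto
  finally show ?thesis by (simp add: power2_eq_square)
qed

section \<open>The block swap symmetry\<close>

definition block_swap :: "nat \<Rightarrow> nat \<Rightarrow> nat" where
  "block_swap n a = (if a < n then n + a else if a < 2*n then a - n else a)"

lemma block_swap_block_swap [simp]: "block_swap n (block_swap n a) = a"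
  by (simp add: block_swap_def) linarith

lemma block_swap_permutes: "block_swap n permutes {..<2*n}"
  unfolding permutes_def
proof (intro conjI allI impI)
  show "block_swap n x = x" if "x \<notin> {..<2*n}" for x
    using that by (simp add: block_swap_def)
  show "\<exists>!x. block_swap n x = y" for y
    by (metis block_swap_block_swap)
qed

lemma mmul_conj_permutes:
  assumes \<pi>: "\<pi> permutes {..<m}"
    and "\<And>a b. a < m \<Longrightarrow> b < m \<Longrightarrow> A' a b = A (\<pi> a) (\<pi> b)"
    and "\<And>a b. a < m \<Longrightarrow> b < m \<Longrightarrow> B' a b = B (\<pi> a) (\<pi> b)"
    and "a < m" "b < m"
  shows "mmul m A' B' a b = mmul m A B (\<pi> a) (\<pi> b)"
proof -
  have "mmul m A' B' a b = (\<Sum>k<m. A (\<pi> a) (\<pi> k) * B (\<pi> k) (\<pi> b))"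
    unfolding mmul_def using assms by (intro sum.cong) auto
  also have "\<dots> = mmul m A B (\<pi> a) (\<pi> b)"
    unfolding mmul_def using sum.permute[OF \<pi>, of "\<lambda>k. A (\<pi> a) k * B k (\<pi> b)"] by (simp add: comp_def)
  finally show ?thesis .
qed

lemma cpermmat_inv: "\<sigma> permutes S \<Longrightarrow> cpermmat n (inv \<sigma>) a b = cpermmat n \<sigma> b a"
  by (simp add: cpermmat_def permmat_def permutes_inv_eq)

lemma blockP_inv:
  assumes "\<sigma> permutes {..<n}" "a < 2*n" "b < 2*n"
  shows "blockP n (inv \<sigma>) a b = blockP n \<sigma> (block_swap n a) (block_swap n b)"
  using assms(2,3) by (auto simp: blockP_def block_swap_def cpermmat_inv[OF assms(1)])

lemma PMPM_block_swap:
  assumes \<sigma>: "\<sigma> permutes {..<n}" and "a < 2*n" "b < 2*n"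
  shows "PMPM n (\<lambda>a b. M (block_swap n a) (block_swap n b)) (inv \<sigma>) a b
       = PMPM n M \<sigma> (block_swap n a) (block_swap n b)"
proof -
  note conj = mmul_conj_permutes[OF block_swap_permutes]
  let ?M' = "\<lambda>a b. M (block_swap n a) (block_swap n b)"
  let ?PM' = "mmul (2*n) (blockP n (inv \<sigma>)) ?M'" and ?PM = "mmul (2*n) (blockP n \<sigma>) M"
  let ?PMP' = "mmul (2*n) ?PM' (blockP n (inv \<sigma>))" and ?PMP = "mmul (2*n) ?PM (blockP n \<sigma>)"
  have PM: "?PM' a b = ?PM (block_swap n a) (block_swap n b)" if "a < 2*n" "b < 2*n" for a b
    by (rule conj) (simp_all add: that blockP_inv[OF \<sigma>])
  have PMP: "?PMP' a b = ?PMP (block_swap n a) (block_swap n b)" if "a < 2*n" "b < 2*n" for a b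
    by (rule conj) (simp_all add: that PM blockP_inv[OF \<sigma>])
  show ?thesis
    unfolding PMPM_def by (rule conj) (simp_all add: PMP assms(2,3))
qed

section \<open>Error estimates\<close>

lemma cov_bounds:
  assumes "n \<ge> 1"
  shows "cmod (cov\<alpha> n - 1 / of_nat n) \<le> 2 / real n ^ 2" "cmod (cov\<alpha> n) \<le> 2 / real n"
    "cmod (cov\<beta> n) \<le> 2 / real n ^ 2" "cmod (cov\<gamma> n) \<le> 2 / real n ^ 2"
proof -
  consider "n = 1" | "n \<ge> 2" using assms by linarith
  then have "cmod (cov\<alpha> n - 1 / of_nat n) \<le> 2 / real n ^ 2 \<and> cmod (cov\<alpha> n) \<le> 2 / real n
    \<and> cmod (cov\<beta> n) \<le> 2 / real n ^ 2 \<and> cmod (cov\<gamma> n) \<le> 2 / real n ^ 2"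
  proof cases
    case 1
    then show ?thesis by (simp add: cov\<alpha>_def cov\<beta>_def cov\<gamma>_def)
  next
    case 2
    define N where "N = real n"
    have N: "N \<ge> 2" using 2 unfolding N_def by simp
    have "cov\<alpha> n = of_real (1 / (N - 1))" "cov\<beta> n = of_real (1 / (N * (N - 1)))"
      "cov\<gamma> n = of_real (1 / (N\<^sup>2 * (N - 1)))" "cov\<alpha> n - 1 / of_nat n = cov\<beta> n"
      using cov_differences(1)[OF 2] unfolding cov\<alpha>_def cov\<beta>_def cov\<gamma>_def N_def
      by (simp_all add: algebra_simps)
    moreover have "1 / (N - 1) \<le> 2 / N" "1 / (N * (N - 1)) \<le> 2 / N\<^sup>2"
      "1 / (N\<^sup>2 * (N - 1)) \<le> 2 / N\<^sup>2"
      using N by (simp_all add: field_simps power2_eq_square)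
    ultimately show ?thesis
      using N unfolding N_def[symmetric] by (simp only: norm_of_real) simp
  qed
  then show "cmod (cov\<alpha> n - 1 / of_nat n) \<le> 2 / real n ^ 2" "cmod (cov\<alpha> n) \<le> 2 / real n"
    "cmod (cov\<beta> n) \<le> 2 / real n ^ 2" "cmod (cov\<gamma> n) \<le> 2 / real n ^ 2" by auto
qed

lemma cmod_mult_le: "cmod x \<le> a \<Longrightarrow> cmod y \<le> b \<Longrightarrow> cmod (x * y) \<le> a * b"
  by (simp add: norm_mult mult_mono')

lemma cmod_small_coeff_term_le:
  assumes "n \<ge> 1" "cmod c \<le> 2 / real n ^ 2" "cmod X \<le> n * sqrt n * K\<^sup>2"
  shows "cmod (c * X) \<le> 2 * K\<^sup>2 / sqrt n"
proof -
  have "cmod (c * X) \<le> 2 / real n ^ 2 * (n * sqrt n * K\<^sup>2)"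
    by (rule cmod_mult_le[OF assms(2,3)])
  also have "\<dots> = 2 * K\<^sup>2 / sqrt n"
    using assms(1) by (simp add: field_simps power2_eq_square real_sqrt_mult[symmetric])
  finally show ?thesis .
qed

lemma n_sqrt_n_bounds:
  fixes K :: real and n :: nat
  assumes "n \<ge> 1" "K \<ge> 0"
  shows "n * K * K \<le> n * sqrt n * K\<^sup>2" "n * K * (K * sqrt n) \<le> n * sqrt n * K\<^sup>2"
    "K * sqrt n * (K * sqrt n) \<le> n * sqrt n * K\<^sup>2" "K\<^sup>2 * sqrt n \<le> n * sqrt n * K\<^sup>2"
proof -
  have "1 \<le> sqrt n" "0 \<le> n * K\<^sup>2" "1 \<le> real n" "0 \<le> sqrt n * K\<^sup>2"
    using assms by simp_all
  from mult_left_mono[OF this(1,2)] mult_right_mono[OF this(3,4)]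
  show "n * K * K \<le> n * sqrt n * K\<^sup>2" "n * K * (K * sqrt n) \<le> n * sqrt n * K\<^sup>2"
    "K * sqrt n * (K * sqrt n) \<le> n * sqrt n * K\<^sup>2" "K\<^sup>2 * sqrt n \<le> n * sqrt n * K\<^sup>2"
    by (simp_all add: power2_eq_square mult_ac)
qed

lemma cmod_four_terms_le: "cmod (a - b - c + d) \<le> cmod a + cmod b + cmod c + cmod d"
  by (rule order_trans[OF norm_triangle_ineq] order_trans[OF norm_triangle_ineq4] add_mono order_refl)+

lemma sum_nested_mult_factor:
  fixes f :: "'b \<Rightarrow> 'c \<Rightarrow> 'a::semiring_0"
  shows "(\<Sum>k\<in>A. \<Sum>w\<in>B. \<Sum>y\<in>C. f w y * g k) = (\<Sum>w\<in>B. \<Sum>y\<in>C. f w y) * (\<Sum>k\<in>A. g k)"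
proof -
  have "(\<Sum>w\<in>B. \<Sum>y\<in>C. f w y) * (\<Sum>k\<in>A. g k) = (\<Sum>k\<in>A. (\<Sum>w\<in>B. \<Sum>y\<in>C. f w y) * g k)"
    by (simp only: sum_distrib_left)
  then show ?thesis by (simp add: sum_distrib_right)
qed

lemma upper_row_leading_part_le:
  fixes M :: "nat \<Rightarrow> nat \<Rightarrow> complex"
  assumes i: "i < n" and s: "s < 2*n"
  defines "K \<equiv> opnorm (2*n) M" and "T \<equiv> \<Sum>y<n. M (n+y) (n+y)"
  shows "cmod (cov\<alpha> n * (T * M i s) - cov\<beta> n * (\<Sum>w<n. \<Sum>y<n. M (n+y) (n+w) * M i s)
      - cov\<beta> n * (\<Sum>k<n. \<Sum>w<n. M (n+w) (n+w) * M k s)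
      + cov\<gamma> n * (\<Sum>k<n. \<Sum>w<n. \<Sum>y<n. M (n+y) (n+w) * M k s)
      - M i s * (T / of_nat n)) \<le> 8 * K\<^sup>2 / sqrt n"
proof -
  have n: "n \<ge> 1" using i by simp
  note bound = n_sqrt_n_bounds[OF n opnorm_nonneg, of "2*n" M, folded K_def]
  note small = cmod_small_coeff_term_le[OF n, of _ _ K]
  let ?B = "\<Sum>w<n. \<Sum>y<n. M (n+y) (n+w)" and ?C = "\<Sum>k<n. M k s"
  have T: "cmod T \<le> n * K"
    unfolding T_def K_def using cmod_diag_sum_le[of n n "2*n" n M] by simp
  have Mis: "cmod (M i s) \<le> K"
    unfolding K_def using i s by (intro cmod_entry_le_opnorm) simp_all
  have B: "cmod ?B \<le> n * K"
    unfolding K_def using cmod_block_sum_le[of n n "2*n" n M] by (subst sum.swap) (simp add: mult.commute)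
  have C: "cmod ?C \<le> K * sqrt n"
    unfolding K_def using cmod_col_sum_le[of 0 n "2*n" s M] s by simp
  have "(\<Sum>w<n. \<Sum>y<n. M (n+y) (n+w) * M i s) = ?B * M i s"
    by (simp add: sum_distrib_right)
  moreover have "(\<Sum>k<n. \<Sum>w<n. M (n+w) (n+w) * M k s) = T * ?C"
    unfolding T_def by (subst sum_product) (rule sum.swap)
  moreover have "(\<Sum>k<n. \<Sum>w<n. \<Sum>y<n. M (n+y) (n+w) * M k s) = ?B * ?C"
    by (rule sum_nested_mult_factor)
  moreover have "cov\<alpha> n * (T * M i s) - M i s * (T / of_nat n) = (cov\<alpha> n - 1 / of_nat n) * (T * M i s)"
    by (simp add: algebra_simps)
  ultimately have "cmod (cov\<alpha> n * (T * M i s) - cov\<beta> n * (\<Sum>w<n. \<Sum>y<n. M (n+y) (n+w) * M i s)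
      - cov\<beta> n * (\<Sum>k<n. \<Sum>w<n. M (n+w) (n+w) * M k s)
      + cov\<gamma> n * (\<Sum>k<n. \<Sum>w<n. \<Sum>y<n. M (n+y) (n+w) * M k s)
      - M i s * (T / of_nat n))
    = cmod ((cov\<alpha> n - 1 / of_nat n) * (T * M i s) - cov\<beta> n * (?B * M i s)
      - cov\<beta> n * (T * ?C) + cov\<gamma> n * (?B * ?C))"
    by (simp add: algebra_simps)
  also have "\<dots> \<le> 4 * (2 * K\<^sup>2 / sqrt n)"
    using small[OF cov_bounds(1)[OF n] order_trans[OF cmod_mult_le[OF T Mis] bound(1)]]
      small[OF cov_bounds(3)[OF n] order_trans[OF cmod_mult_le[OF B Mis] bound(1)]]
      small[OF cov_bounds(3)[OF n] order_trans[OF cmod_mult_le[OF T C] bound(2)]]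
      small[OF cov_bounds(4)[OF n] order_trans[OF cmod_mult_le[OF B C] bound(2)]]
    by (intro order_trans[OF cmod_four_terms_le]) linarith
  finally show ?thesis by simp
qed

lemma upper_row_remainder_le:
  fixes M :: "nat \<Rightarrow> nat \<Rightarrow> complex"
  assumes i: "i < n" and s: "s < 2*n"
  defines "K \<equiv> opnorm (2*n) M"
  shows "cmod (cov\<alpha> n * (\<Sum>y<n. M (n+y) i * M (n+y) s) - cov\<beta> n * (\<Sum>w<n. \<Sum>y<n. M (n+y) i * M (n+w) s)
      - cov\<beta> n * (\<Sum>k<n. \<Sum>w<n. M (n+w) k * M (n+w) s)
      + cov\<gamma> n * (\<Sum>k<n. \<Sum>w<n. \<Sum>y<n. M (n+y) k * M (n+w) s)) \<le> 8 * K\<^sup>2 / sqrt n"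
proof -
  have n: "n \<ge> 1" using i by simp
  note bound = n_sqrt_n_bounds[OF n opnorm_nonneg, of "2*n" M, folded K_def]
  note small = cmod_small_coeff_term_le[OF n, of _ _ K]
  let ?Y = "\<Sum>y<n. M (n+y) i * M (n+y) s" and ?W = "\<Sum>k<n. \<Sum>w<n. M (n+w) k * M (n+w) s"
  let ?B = "\<Sum>k<n. \<Sum>y<n. M (n+y) k"
  let ?Ci = "\<Sum>y<n. M (n+y) i" and ?Cs = "\<Sum>w<n. M (n+w) s"
  have "cmod (cov\<alpha> n * ?Y) \<le> 2 / real n * K\<^sup>2"
    unfolding K_def using i s by (intro cmod_mult_le cov_bounds(2)[OF n] cmod_col_inner_le) simp_all
  also have "\<dots> \<le> 2 * K\<^sup>2 / sqrt n"
  proof -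
    have "sqrt n \<le> n"
      using n real_sqrt_le_mono[of "real n" "(real n)\<^sup>2"] by (simp add: power2_eq_square)
    then have "K\<^sup>2 * sqrt n \<le> K\<^sup>2 * n" by (intro mult_left_mono) simp_all
    then show ?thesis using n by (simp add: field_simps)
  qed
  finally have Y: "cmod (cov\<alpha> n * ?Y) \<le> 2 * K\<^sup>2 / sqrt n" .
  have Ci: "cmod ?Ci \<le> K * sqrt n"
    unfolding K_def using cmod_col_sum_le[of n n "2*n" i M] i by simp
  have Cs: "cmod ?Cs \<le> K * sqrt n"
    unfolding K_def using cmod_col_sum_le[of n n "2*n" s M] s by simp
  have B: "cmod ?B \<le> n * K"
    unfolding K_def using cmod_block_sum_le[of n n "2*n" 0 M] by (subst sum.swap) (simp add: mult.commute)
  have W: "cmod ?W \<le> K\<^sup>2 * sqrt n"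
  proof -
    have "?W = (\<Sum>y<n. \<Sum>w<n. M (n+y) s * M (n+y) (0+w))"
      by (subst sum.swap) (simp add: mult.commute)
    then show ?thesis
      unfolding K_def using cmod_col_weighted_block_sum_le[of n n "2*n" 0 s M] s by simp
  qed
  have "(\<Sum>w<n. \<Sum>y<n. M (n+y) i * M (n+w) s) = ?Ci * ?Cs"
    by (subst sum_product) (rule sum.swap)
  moreover have "(\<Sum>k<n. \<Sum>w<n. \<Sum>y<n. M (n+y) k * M (n+w) s) = ?B * ?Cs"
    by (subst sum.swap) (rule sum_nested_mult_factor)
  ultimately have "cmod (cov\<alpha> n * ?Y - cov\<beta> n * (\<Sum>w<n. \<Sum>y<n. M (n+y) i * M (n+w) s)
      - cov\<beta> n * ?W + cov\<gamma> n * (\<Sum>k<n. \<Sum>w<n. \<Sum>y<n. M (n+y) k * M (n+w) s))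
    = cmod (cov\<alpha> n * ?Y - cov\<beta> n * (?Ci * ?Cs) - cov\<beta> n * ?W + cov\<gamma> n * (?B * ?Cs))"
    by simp
  also have "\<dots> \<le> 4 * (2 * K\<^sup>2 / sqrt n)"
    using Y small[OF cov_bounds(3)[OF n] order_trans[OF cmod_mult_le[OF Ci Cs] bound(3)]]
      small[OF cov_bounds(3)[OF n] order_trans[OF W bound(4)]]
      small[OF cov_bounds(4)[OF n] order_trans[OF cmod_mult_le[OF B Cs] bound(2)]]
    by (intro order_trans[OF cmod_four_terms_le]) linarith
  finally show ?thesis by simp
qed

lemma Eperm_PMPM_upper_row_approx:
  assumes "i < n" "s < 2*n"
  shows "cmod (Eperm n (\<lambda>\<sigma>. PMPM n M \<sigma> i s) - M i s * ((\<Sum>j<n. M (n+j) (n+j)) / of_nat n))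
     \<le> 16 * (opnorm (2*n) M)\<^sup>2 / sqrt n"
proof -
  have triangle: "cmod (a + b - c) \<le> cmod (a - c) + cmod b" for a b c :: complex
    using norm_triangle_ineq[of "a - c" b] by (simp add: algebra_simps)
  show ?thesis
    unfolding Eperm_PMPM_upper_row[OF assms(1)]
    using upper_row_leading_part_le[OF assms, of M] upper_row_remainder_le[OF assms, of M]
    by (intro order_trans[OF triangle]) simp
qed

lemma Eperm_PMPM_lower_row_approx:
  assumes i: "i < n" and t: "t < 2*n"
  shows "cmod (Eperm n (\<lambda>\<sigma>. PMPM n M \<sigma> (n+i) t) - M (n+i) t * ((\<Sum>j<n. M j j) / of_nat n))
     \<le> 16 * (opnorm (2*n) M)\<^sup>2 / sqrt n"
proof -
  define M' where "M' a b = M (block_swap n a) (block_swap n b)" for a b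
  define s where "s = block_swap n t"
  have s: "s < 2*n" "block_swap n s = t"
    using t unfolding s_def block_swap_def by auto
  have "Eperm n (\<lambda>\<sigma>. PMPM n M \<sigma> (n+i) t) = Eperm n (\<lambda>\<sigma>. PMPM n M' (inv \<sigma>) i s)"
    using PMPM_block_swap[of _ n i s M] i s unfolding M'_def
    by (intro Eperm_cong) (simp add: block_swap_def)
  also have "\<dots> = Eperm n (\<lambda>\<sigma>. PMPM n M' \<sigma> i s)"
    by (rule Eperm_inv)
  moreover have "M' i s = M (n+i) t" "(\<Sum>j<n. M' (n+j) (n+j)) = (\<Sum>j<n. M j j)"
    using i s unfolding M'_def by (simp_all add: block_swap_def)
  moreover have "opnorm (2*n) M' = opnorm (2*n) M"
    unfolding M'_def by (rule opnorm_conj_permutes[OF block_swap_permutes])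
  ultimately show ?thesis
    using Eperm_PMPM_upper_row_approx[OF i s(1), of M'] by simp
qed

theorem lemma7p4:
  "\<exists>C::real. \<forall>n::nat. \<forall>M::nat \<Rightarrow> nat \<Rightarrow> complex. \<forall>i<n.
     cmod (Eperm n (\<lambda>\<sigma>. PMPM n M \<sigma> i i)
        - M i i * ((\<Sum>j<n. M (n+j) (n+j)) / of_nat n)) \<le> C * (opnorm (2*n) M)\<^sup>2 / sqrt (real n)
   \<and> cmod (Eperm n (\<lambda>\<sigma>. PMPM n M \<sigma> (n+i) (n+i))
        - M (n+i) (n+i) * ((\<Sum>j<n. M j j) / of_nat n)) \<le> C * (opnorm (2*n) M)\<^sup>2 / sqrt (real n)
   \<and> cmod (Eperm n (\<lambda>\<sigma>. PMPM n M \<sigma> (n+i) i)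
        - M (n+i) i * ((\<Sum>j<n. M j j) / of_nat n)) \<le> C * (opnorm (2*n) M)\<^sup>2 / sqrt (real n)
   \<and> cmod (Eperm n (\<lambda>\<sigma>. PMPM n M \<sigma> i (n+i))
        - M i (n+i) * ((\<Sum>j<n. M (n+j) (n+j)) / of_nat n)) \<le> C * (opnorm (2*n) M)\<^sup>2 / sqrt (real n)"
  by (intro exI[of _ 16] allI impI conjI Eperm_PMPM_lower_row_approx Eperm_PMPM_upper_row_approx)
     simp_all

end
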